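(* Let $(S,\mathfrak{n})$ be a complete Noetherian local ring with coefficient field $k$, $\Gamma$ a standard set of monomials in $k[T_1,\dots,T_r]$, and $I$ an $\mathfrak{n}$-primary ideal with a generating sequence $x_1,\dots,x_r$ which is $\Gamma$-expandable. Let $f_1,\dots,f_l\in S$ be such that their images form a $k$-basis of $S/I$, and let $\sigma:S/I\to S$ be the $k$-linear map with $\sigma(f_i+I)=f_i$. Then $\sigma$ is a lifting, and every $f\in S$ can be written uniquely as a convergent sum $f=\sum_{1\le i\le l,\,u\in\Gamma}c_{i,u}f_iu(x)$ with $c_{i,u}\in k$; the map $f\mapsto(c_{i,u})_{i,u}$ is a $k$-linear isomorphism $S\cong\prod_{1\le i\le l,\,u\in\Gamma}k$.
   Context: A standard set is a set of monomials closed under taking divisors. For $u=T_1^{a_1}\cdots T_r^{a_r}$, $u(x)=x_1^{a_1}\cdots x_r^{a_r}$. A lifting is a map $\sigma:S/I\to S$ with $\sigma(0)=0$ and $\pi\circ\sigma=\mathrm{id}_{S/I}$. $x_1,\dots,x_r$ is $\Gamma$-expandable if for every lifting $\sigma$ every $f\in S$ has a unique representation $f=\sum_{u\in\Gamma}f_uu(x)$ (convergent sum) with all $f_u\in\sigma(S/I)$. *)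

theory Defs
  imports Main
begin

text \<open>Commutative algebra on the whole of a type 'a :: comm_ring_1 (the ring S).
  Ideals are subsets of the type.\<close>

definition is_ideal :: "'a::comm_ring_1 set \<Rightarrow> bool" where
  "is_ideal J \<longleftrightarrow> 0 \<in> J \<and> (\<forall>a\<in>J. \<forall>b\<in>J. a + b \<in> J) \<and> (\<forall>a\<in>J. \<forall>s. s * a \<in> J)"

definition ideal_gen :: "'a::comm_ring_1 set \<Rightarrow> 'a set" where
  "ideal_gen A = \<Inter>{J. is_ideal J \<and> A \<subseteq> J}"

definition ideal_prod :: "'a::comm_ring_1 set \<Rightarrow> 'a set \<Rightarrow> 'a set" where
  "ideal_prod I J = ideal_gen {a * b | a b. a \<in> I \<and> b \<in> J}"

fun ideal_pow :: "'a::comm_ring_1 set \<Rightarrow> nat \<Rightarrow> 'a set" where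
  "ideal_pow I 0 = UNIV"
| "ideal_pow I (Suc m) = ideal_prod I (ideal_pow I m)"

definition noetherian :: "'a::comm_ring_1 itself \<Rightarrow> bool" where
  "noetherian _ \<longleftrightarrow> (\<forall>J::'a set. is_ideal J \<longrightarrow> (\<exists>F. finite F \<and> J = ideal_gen F))"

definition local_ring_max :: "'a::comm_ring_1 set \<Rightarrow> bool" where
  "local_ring_max n \<longleftrightarrow> is_ideal n \<and> n \<noteq> UNIV \<and> (\<forall>a. a \<notin> n \<longrightarrow> (\<exists>b. a * b = 1))"

definition adic_cauchy :: "'a::comm_ring_1 set \<Rightarrow> (nat \<Rightarrow> 'a) \<Rightarrow> bool" where
  "adic_cauchy n s \<longleftrightarrow> (\<forall>m. \<exists>N. \<forall>i\<ge>N. \<forall>j\<ge>N. s i - s j \<in> ideal_pow n m)"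

definition adic_lim :: "'a::comm_ring_1 set \<Rightarrow> (nat \<Rightarrow> 'a) \<Rightarrow> 'a \<Rightarrow> bool" where
  "adic_lim n s L \<longleftrightarrow> (\<forall>m. \<exists>N. \<forall>i\<ge>N. s i - L \<in> ideal_pow n m)"

definition adic_complete :: "'a::comm_ring_1 set \<Rightarrow> bool" where
  "adic_complete n \<longleftrightarrow> (\<Inter>m. ideal_pow n m) = {0} \<and>
     (\<forall>s. adic_cauchy n s \<longrightarrow> (\<exists>L. adic_lim n s L))"

text \<open>Coefficient field: a subfield k of S mapping bijectively onto S/n.\<close>
definition coefficient_field :: "'a::comm_ring_1 set \<Rightarrow> 'a set \<Rightarrow> bool" where
  "coefficient_field n k \<longleftrightarrow>
     0 \<in> k \<and> 1 \<in> k \<and> (\<forall>a\<in>k. \<forall>b\<in>k. a + b \<in> k \<and> a * b \<in> k) \<and> (\<forall>a\<in>k. - a \<in> k) \<and>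
     (\<forall>a\<in>k. a \<noteq> 0 \<longrightarrow> (\<exists>b\<in>k. a * b = 1)) \<and>
     (\<forall>s. \<exists>!a. a \<in> k \<and> s - a \<in> n)"

definition ideal_radical :: "'a::comm_ring_1 set \<Rightarrow> 'a set" where
  "ideal_radical I = {a. \<exists>j. a ^ j \<in> I}"

definition primary_ideal :: "'a::comm_ring_1 set \<Rightarrow> bool" where
  "primary_ideal I \<longleftrightarrow> is_ideal I \<and> I \<noteq> UNIV \<and>
     (\<forall>a b. a * b \<in> I \<longrightarrow> a \<notin> I \<longrightarrow> b \<in> ideal_radical I)"

definition n_primary :: "'a::comm_ring_1 set \<Rightarrow> 'a set \<Rightarrow> bool" where
  "n_primary n I \<longleftrightarrow> primary_ideal I \<and> ideal_radical I = n"

text \<open>Monomials in T_1..T_r are exponent vectors u :: nat => nat (T_{i+1} has exponent u i),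
  with u i = 0 for i >= r.\<close>
definition monomials :: "nat \<Rightarrow> (nat \<Rightarrow> nat) set" where
  "monomials r = {u. \<forall>i\<ge>r. u i = 0}"

definition standard_set :: "nat \<Rightarrow> (nat \<Rightarrow> nat) set \<Rightarrow> bool" where
  "standard_set r \<Gamma> \<longleftrightarrow> \<Gamma> \<subseteq> monomials r \<and> (\<forall>u\<in>\<Gamma>. \<forall>v. (\<forall>i. v i \<le> u i) \<longrightarrow> v \<in> \<Gamma>)"

definition mono_eval :: "nat \<Rightarrow> (nat \<Rightarrow> 'a::comm_ring_1) \<Rightarrow> (nat \<Rightarrow> nat) \<Rightarrow> 'a" where
  "mono_eval r x u = (\<Prod>i<r. x i ^ u i)"

definition adic_has_sum :: "'a::comm_ring_1 set \<Rightarrow> ('b \<Rightarrow> 'a) \<Rightarrow> 'b set \<Rightarrow> 'a \<Rightarrow> bool" where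
  "adic_has_sum n g A L \<longleftrightarrow>
     (\<forall>m. \<exists>F0. finite F0 \<and> F0 \<subseteq> A \<and>
        (\<forall>F. finite F \<and> F0 \<subseteq> F \<and> F \<subseteq> A \<longrightarrow> L - sum g F \<in> ideal_pow n m))"

text \<open>A lifting S/I -> S is modelled as sigma composed with the projection S -> S/I:
  a function on S that is constant on cosets of I, sends I to 0, and satisfies
  sigma a + I = a + I.  Its image is sigma(S/I).\<close>
definition is_lifting :: "'a::comm_ring_1 set \<Rightarrow> ('a \<Rightarrow> 'a) \<Rightarrow> bool" where
  "is_lifting I \<sigma> \<longleftrightarrow> (\<forall>a b. a - b \<in> I \<longrightarrow> \<sigma> a = \<sigma> b) \<and> (\<forall>a\<in>I. \<sigma> a = 0) \<and>
     (\<forall>a. \<sigma> a - a \<in> I)"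

definition expandable ::
  "'a::comm_ring_1 set \<Rightarrow> 'a set \<Rightarrow> nat \<Rightarrow> (nat \<Rightarrow> 'a) \<Rightarrow> (nat \<Rightarrow> nat) set \<Rightarrow> bool" where
  "expandable n I r x \<Gamma> \<longleftrightarrow>
     (\<forall>\<sigma>. is_lifting I \<sigma> \<longrightarrow> (\<forall>f. \<exists>!c::(nat \<Rightarrow> nat) \<Rightarrow> 'a.
        (\<forall>u\<in>\<Gamma>. c u \<in> range \<sigma>) \<and> (\<forall>u. u \<notin> \<Gamma> \<longrightarrow> c u = 0) \<and>
        adic_has_sum n (\<lambda>u. c u * mono_eval r x u) \<Gamma> f))"

definition coeff_families :: "'a set \<Rightarrow> nat \<Rightarrow> (nat \<Rightarrow> nat) set \<Rightarrow> (nat \<Rightarrow> (nat \<Rightarrow> nat) \<Rightarrow> 'a::zero) set" where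
  "coeff_families k l \<Gamma> = {c. \<forall>i u. (i < l \<and> u \<in> \<Gamma> \<longrightarrow> c i u \<in> k) \<and>
                                   (\<not> (i < l \<and> u \<in> \<Gamma>) \<longrightarrow> c i u = 0)}"

definition represents ::
  "'a::comm_ring_1 set \<Rightarrow> nat \<Rightarrow> (nat \<Rightarrow> 'a) \<Rightarrow> nat \<Rightarrow> (nat \<Rightarrow> 'a) \<Rightarrow> (nat \<Rightarrow> nat) set
     \<Rightarrow> (nat \<Rightarrow> (nat \<Rightarrow> nat) \<Rightarrow> 'a) \<Rightarrow> 'a \<Rightarrow> bool" where
  "represents n r x l f \<Gamma> c s \<longleftrightarrow>
     adic_has_sum n (\<lambda>(i, u). c i u * f i * mono_eval r x u) ({..<l} \<times> \<Gamma>) s"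

end

theory Submission
  imports Defs
begin

text \<open>Since \<sigma> is k-linear, kills I and fixes the f_i, its image is the k-span of f_1, ..., f_l,
  and the f_i form a k-basis of that span. An expansion s = \<Sum>_u \<sigma>_u u(x) with every \<sigma>_u in the
  image of \<sigma> is therefore the same thing as a family c_{i,u} in k, via \<sigma>_u = \<Sum>_i c_{i,u} f_i, and
  \<Gamma>-expandability gives existence and uniqueness of the c_{i,u}. Regrouping the double series
  \<Sum>_{i,u} c_{i,u} f_i u(x) into \<Sum>_u \<sigma>_u u(x) is legitimate because, the x_j lying in n, every
  such double series converges in the complete ring S and n-adic limits are unique. The same two
  facts make s \<mapsto> (c_{i,u}) bijective, additive and k-linear.\<close>

lemma bij_betw_ex1_pullback:
  assumes h: "bij_betw h A B" and ex1: "\<exists>!b. b \<in> B \<and> P b"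
  shows "\<exists>!a. a \<in> A \<and> P (h a)"
proof -
  obtain b where b: "b \<in> B" "P b" and b_unique: "\<And>b'. b' \<in> B \<Longrightarrow> P b' \<Longrightarrow> b' = b"
    using ex1 by blast
  obtain a where a: "a \<in> A" "h a = b"
    using b(1) bij_betw_imp_surj_on[OF h] by blast
  show ?thesis
  proof (rule ex1I[of _ a])
    show "a \<in> A \<and> P (h a)" using a b by simp
  next
    fix a' assume a': "a' \<in> A \<and> P (h a')"
    then have "h a' \<in> B" using bij_betw_apply[OF h] by simp
    with a' have "h a' = h a" using a(2) b_unique by simp
    with a' a(1) show "a' = a" using bij_betw_imp_inj_on[OF h] by (simp add: inj_on_eq_iff)
  qed
qed

lemma bij_betw_The_unique:
  assumes ex1: "\<And>s. \<exists>!c. c \<in> C \<and> R c s"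
    and ex: "\<And>c. c \<in> C \<Longrightarrow> \<exists>s. R c s"
    and unique: "\<And>c s t. R c s \<Longrightarrow> R c t \<Longrightarrow> s = t"
  shows "bij_betw (\<lambda>s. THE c. c \<in> C \<and> R c s) UNIV C"
proof -
  let ?\<Phi> = "\<lambda>s. THE c. c \<in> C \<and> R c s"
  have \<Phi>: "?\<Phi> s \<in> C \<and> R (?\<Phi> s) s" for s by (rule theI'[OF ex1])
  have "inj ?\<Phi>"
  proof (rule injI)
    fix s t assume eq: "?\<Phi> s = ?\<Phi> t"
    have "R (?\<Phi> s) s" "R (?\<Phi> s) t" using \<Phi>[of s] \<Phi>[of t] eq by simp_all
    then show "s = t" by (rule unique)
  qed
  moreover have "C \<subseteq> range ?\<Phi>"
  proof
    fix c assume c: "c \<in> C"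
    obtain s where "R c s" using ex[OF c] by blast
    with c have "?\<Phi> s = c" by (intro the1_equality[OF ex1]) simp
    then show "c \<in> range ?\<Phi>" by (rule range_eqI[OF sym])
  qed
  moreover have "range ?\<Phi> \<subseteq> C" using \<Phi> by blast
  ultimately show ?thesis unfolding bij_betw_def by blast
qed

section \<open>Ideals and their powers\<close>

lemma is_ideal_ideal_gen: "is_ideal (ideal_gen A)"
  unfolding is_ideal_def ideal_gen_def by auto

lemma ideal_gen_subset: "A \<subseteq> ideal_gen A"
  unfolding ideal_gen_def by auto

lemma ideal_gen_least: "is_ideal J \<Longrightarrow> A \<subseteq> J \<Longrightarrow> ideal_gen A \<subseteq> J"
  unfolding ideal_gen_def by auto

lemma ideal_zero: "is_ideal J \<Longrightarrow> 0 \<in> J"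
  unfolding is_ideal_def by auto

lemma ideal_add: "is_ideal J \<Longrightarrow> a \<in> J \<Longrightarrow> b \<in> J \<Longrightarrow> a + b \<in> J"
  unfolding is_ideal_def by auto

lemma ideal_mult_left: "is_ideal J \<Longrightarrow> a \<in> J \<Longrightarrow> s * a \<in> J"
  unfolding is_ideal_def by auto

lemma ideal_mult_right: "is_ideal J \<Longrightarrow> a \<in> J \<Longrightarrow> a * s \<in> J"
  using ideal_mult_left[of J a s] by (simp add: mult.commute)

lemma ideal_uminus: "is_ideal J \<Longrightarrow> a \<in> J \<Longrightarrow> - a \<in> J"
  using ideal_mult_left[of J a "- 1"] by simp

lemma ideal_diff: "is_ideal J \<Longrightarrow> a \<in> J \<Longrightarrow> b \<in> J \<Longrightarrow> a - b \<in> J"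
  using ideal_add[of J a "- b"] ideal_uminus[of J b] by simp

lemma ideal_sum: "is_ideal J \<Longrightarrow> (\<And>a. a \<in> F \<Longrightarrow> g a \<in> J) \<Longrightarrow> sum g F \<in> J"
  by (induction F rule: infinite_finite_induct) (simp_all add: ideal_zero ideal_add)

lemma n_primary_subset: "n_primary n I \<Longrightarrow> I \<subseteq> n"
  unfolding n_primary_def ideal_radical_def by (auto intro: exI[of _ 1])

lemma is_ideal_ideal_pow: "is_ideal (ideal_pow n m)"
  by (cases m) (auto simp: ideal_prod_def is_ideal_ideal_gen is_ideal_def[of UNIV])

lemma ideal_pow_Suc_subset: "ideal_pow n (Suc m) \<subseteq> ideal_pow n m"
  unfolding ideal_pow.simps ideal_prod_def
  by (rule ideal_gen_least) (auto intro: is_ideal_ideal_pow ideal_mult_left[OF is_ideal_ideal_pow])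

lemma ideal_pow_antimono: "m \<le> m' \<Longrightarrow> ideal_pow n m' \<subseteq> ideal_pow n m"
proof (induction m' rule: dec_induct)
  case (step m')
  then show ?case using ideal_pow_Suc_subset[of n m'] by blast
qed simp

lemma power_in_ideal_pow: "a \<in> n \<Longrightarrow> a ^ j \<in> ideal_pow n j"
proof (induction j)
  case (Suc j)
  then have "a * a ^ j \<in> {a * b |a b. a \<in> n \<and> b \<in> ideal_pow n j}" by blast
  then show ?case
    unfolding ideal_pow.simps ideal_prod_def power_Suc by (rule subsetD[OF ideal_gen_subset])
qed simp

lemma mono_eval_in_ideal_pow:
  assumes "\<forall>j<r. x j \<in> n" "j < r" "m \<le> u j"
  shows "mono_eval r x u \<in> ideal_pow n m"
proof -
  have "mono_eval r x u = x j ^ u j * (\<Prod>i\<in>{..<r} - {j}. x i ^ u i)"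
    unfolding mono_eval_def using assms(2) by (simp add: prod.remove)
  moreover have "x j ^ u j \<in> ideal_pow n m"
    using power_in_ideal_pow ideal_pow_antimono[OF assms(3)] assms(1,2) by blast
  ultimately show ?thesis by (simp add: ideal_mult_right is_ideal_ideal_pow)
qed

lemma finite_monomials_bounded: "finite {u \<in> monomials r. \<forall>j<r. u j < N}"
proof (rule finite_subset)
  show "{u \<in> monomials r. \<forall>j<r. u j < N} \<subseteq>
      {u. \<forall>j. (j \<in> {..<r} \<longrightarrow> u j \<in> {..<N}) \<and> (j \<notin> {..<r} \<longrightarrow> u j = 0)}"
    unfolding monomials_def by auto
qed (intro finite_set_of_finite_funs finite_lessThan)

section \<open>n-adically convergent sums\<close>

lemma adic_has_sumE:
  assumes "adic_has_sum n g A L"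
  obtains F0 where "finite F0" "F0 \<subseteq> A"
    "\<And>F. finite F \<Longrightarrow> F0 \<subseteq> F \<Longrightarrow> F \<subseteq> A \<Longrightarrow> L - sum g F \<in> ideal_pow n m"
proof -
  obtain F0 where "finite F0" "F0 \<subseteq> A"
      "\<forall>F. finite F \<and> F0 \<subseteq> F \<and> F \<subseteq> A \<longrightarrow> L - sum g F \<in> ideal_pow n m"
    using assms unfolding adic_has_sum_def by meson
  then show thesis by (intro that) auto
qed

lemma adic_has_sum_unique:
  assumes sep: "(\<Inter>m. ideal_pow n m) = {0}"
    and "adic_has_sum n g A L" "adic_has_sum n g A L'"
  shows "L = L'"
proof -
  have "L - L' \<in> ideal_pow n m" for m
  proof -
    obtain F1 where F1: "finite F1" "F1 \<subseteq> A"
      "\<And>F. finite F \<Longrightarrow> F1 \<subseteq> F \<Longrightarrow> F \<subseteq> A \<Longrightarrow> L - sum g F \<in> ideal_pow n m"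
      by (metis adic_has_sumE[OF assms(2), where m = m])
    obtain F2 where F2: "finite F2" "F2 \<subseteq> A"
      "\<And>F. finite F \<Longrightarrow> F2 \<subseteq> F \<Longrightarrow> F \<subseteq> A \<Longrightarrow> L' - sum g F \<in> ideal_pow n m"
      by (metis adic_has_sumE[OF assms(3), where m = m])
    have "L - sum g (F1 \<union> F2) \<in> ideal_pow n m" "L' - sum g (F1 \<union> F2) \<in> ideal_pow n m"
      using F1(1,2) F2(1,2) by (simp_all add: F1(3) F2(3))
    from ideal_diff[OF is_ideal_ideal_pow this] show ?thesis by simp
  qed
  then have "L - L' \<in> (\<Inter>m. ideal_pow n m)" by blast
  then show ?thesis using sep by simp
qed

lemma adic_has_sum_cong:
  assumes "\<And>a. a \<in> A \<Longrightarrow> g a = h a" "adic_has_sum n g A L"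
  shows "adic_has_sum n h A L"
proof -
  have "sum h F = sum g F" if "F \<subseteq> A" for F
    using assms(1) that by (intro sum.cong) auto
  with assms(2) show ?thesis unfolding adic_has_sum_def by simp
qed

lemma adic_has_sum_add:
  assumes "adic_has_sum n g A L" "adic_has_sum n h A L'"
  shows "adic_has_sum n (\<lambda>a. g a + h a) A (L + L')"
  unfolding adic_has_sum_def
proof
  fix m
  obtain F1 where F1: "finite F1" "F1 \<subseteq> A"
    "\<And>F. finite F \<Longrightarrow> F1 \<subseteq> F \<Longrightarrow> F \<subseteq> A \<Longrightarrow> L - sum g F \<in> ideal_pow n m"
    by (metis adic_has_sumE[OF assms(1), where m = m])
  obtain F2 where F2: "finite F2" "F2 \<subseteq> A"
    "\<And>F. finite F \<Longrightarrow> F2 \<subseteq> F \<Longrightarrow> F \<subseteq> A \<Longrightarrow> L' - sum h F \<in> ideal_pow n m"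
    by (metis adic_has_sumE[OF assms(2), where m = m])
  have "L + L' - (\<Sum>a\<in>F. g a + h a) \<in> ideal_pow n m"
    if "finite F" "F1 \<union> F2 \<subseteq> F" "F \<subseteq> A" for F
  proof -
    have "L - sum g F \<in> ideal_pow n m" "L' - sum h F \<in> ideal_pow n m"
      using that by (simp_all add: F1(3) F2(3))
    from ideal_add[OF is_ideal_ideal_pow this] show ?thesis
      by (simp add: sum.distrib algebra_simps)
  qed
  then show "\<exists>F0. finite F0 \<and> F0 \<subseteq> A \<and> (\<forall>F. finite F \<and> F0 \<subseteq> F \<and> F \<subseteq> A \<longrightarrow>
      L + L' - (\<Sum>a\<in>F. g a + h a) \<in> ideal_pow n m)"
    using F1(1,2) F2(1,2) by (intro exI[of _ "F1 \<union> F2"]) auto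
qed

lemma adic_has_sum_cmult:
  assumes "adic_has_sum n g A L"
  shows "adic_has_sum n (\<lambda>a. c * g a) A (c * L)"
  unfolding adic_has_sum_def
proof
  fix m
  obtain F0 where F0: "finite F0" "F0 \<subseteq> A"
    "\<And>F. finite F \<Longrightarrow> F0 \<subseteq> F \<Longrightarrow> F \<subseteq> A \<Longrightarrow> L - sum g F \<in> ideal_pow n m"
    by (metis adic_has_sumE[OF assms, where m = m])
  have "c * L - (\<Sum>a\<in>F. c * g a) \<in> ideal_pow n m" if "finite F" "F0 \<subseteq> F" "F \<subseteq> A" for F
  proof -
    have "c * (L - sum g F) \<in> ideal_pow n m"
      using F0(3)[OF that] by (rule ideal_mult_left[OF is_ideal_ideal_pow])
    then show ?thesis by (simp add: sum_distrib_left algebra_simps)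
  qed
  then show "\<exists>F0. finite F0 \<and> F0 \<subseteq> A \<and> (\<forall>F. finite F \<and> F0 \<subseteq> F \<and> F \<subseteq> A \<longrightarrow>
      c * L - (\<Sum>a\<in>F. c * g a) \<in> ideal_pow n m)"
    using F0(1,2) by (intro exI[of _ F0]) auto
qed

lemma adic_has_sum_Times_finite:
  assumes "adic_has_sum n (\<lambda>(i, u). t i u) (J \<times> G) L" "finite J"
  shows "adic_has_sum n (\<lambda>u. \<Sum>i\<in>J. t i u) G L"
  unfolding adic_has_sum_def
proof
  fix m
  obtain F1 where F1: "finite F1" "F1 \<subseteq> J \<times> G"
    "\<And>F. finite F \<Longrightarrow> F1 \<subseteq> F \<Longrightarrow> F \<subseteq> J \<times> G \<Longrightarrow> L - sum (\<lambda>(i, u). t i u) F \<in> ideal_pow n m"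
    by (metis adic_has_sumE[OF assms(1), where m = m])
  have "L - (\<Sum>u\<in>F. \<Sum>i\<in>J. t i u) \<in> ideal_pow n m"
    if "finite F" "snd ` F1 \<subseteq> F" "F \<subseteq> G" for F
  proof -
    have "F1 \<subseteq> J \<times> F" using that(2) F1(2) by force
    then have "L - sum (\<lambda>(i, u). t i u) (J \<times> F) \<in> ideal_pow n m"
      using that(1,3) assms(2) by (intro F1(3)) auto
    then show ?thesis
      using that(1) assms(2) by (simp add: sum.cartesian_product[symmetric] sum.swap[of _ J])
  qed
  then show "\<exists>F0. finite F0 \<and> F0 \<subseteq> G \<and> (\<forall>F. finite F \<and> F0 \<subseteq> F \<and> F \<subseteq> G \<longrightarrow>
      L - (\<Sum>u\<in>F. \<Sum>i\<in>J. t i u) \<in> ideal_pow n m)"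
    using F1(1,2) by (intro exI[of _ "snd ` F1"]) auto
qed

lemma adic_cauchy_of_increments:
  assumes "\<And>M N. N \<le> M \<Longrightarrow> S M - S N \<in> ideal_pow n N"
  shows "adic_cauchy n S"
  unfolding adic_cauchy_def
proof (intro allI exI impI)
  fix m i j :: nat
  assume "m \<le> i" "m \<le> j"
  then have "(S i - S m) - (S j - S m) \<in> ideal_pow n m"
    by (intro ideal_diff[OF is_ideal_ideal_pow] assms)
  then show "S i - S j \<in> ideal_pow n m" by simp
qed

lemma mono_cover_finite_subset:
  fixes B :: "nat \<Rightarrow> 'b set"
  assumes mono: "mono B" and cover: "\<And>a. a \<in> A \<Longrightarrow> \<exists>N. a \<in> B N"
    and F: "finite F" "F \<subseteq> A"
  shows "\<exists>M\<ge>N. F \<subseteq> B M"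
proof -
  obtain \<nu> where \<nu>: "\<forall>a\<in>A. a \<in> B (\<nu> a)"
    using bchoice[of A "\<lambda>a N. a \<in> B N"] cover by blast
  have "B (\<nu> a) \<subseteq> B (N + sum \<nu> F)" if "a \<in> F" for a
    using member_le_sum[of a F \<nu>] F(1) that by (intro monoD[OF mono]) auto
  then have "F \<subseteq> B (N + sum \<nu> F)" using \<nu> F(2) by blast
  then show ?thesis by (intro exI[of _ "N + sum \<nu> F"]) simp
qed

lemma adic_has_sum_exhaustion:
  assumes complete: "adic_complete n"
    and fin: "\<And>N. finite (B N)" and sub: "\<And>N. B N \<subseteq> A" and mono: "mono B"
    and cover: "\<And>a. a \<in> A \<Longrightarrow> \<exists>N. a \<in> B N"
    and tail: "\<And>N a. a \<in> A - B N \<Longrightarrow> g a \<in> ideal_pow n N"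
  shows "\<exists>L. adic_has_sum n g A L"
proof -
  define S where "S N = sum g (B N)" for N
  have rest: "sum g (B M - F) \<in> ideal_pow n N" if "B N \<subseteq> F" for M N F
    using sub that by (intro ideal_sum[OF is_ideal_ideal_pow] tail) blast
  have "S M - S N \<in> ideal_pow n N" if "N \<le> M" for M N
    using rest[of N "B N" M] fin monoD[OF mono that]
    unfolding S_def by (simp add: sum.subset_diff[of "B N" "B M"])
  then have "adic_cauchy n S" by (rule adic_cauchy_of_increments)
  then obtain L where L: "adic_lim n S L"
    using complete unfolding adic_complete_def by blast
  have "adic_has_sum n g A L"
    unfolding adic_has_sum_def
  proof
    fix m
    obtain N1 where N1: "\<forall>i\<ge>N1. S i - L \<in> ideal_pow n m"
      using L unfolding adic_lim_def by blast
    define N where "N = max N1 m"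
    have "L - sum g F \<in> ideal_pow n m" if F: "finite F" "B N \<subseteq> F" "F \<subseteq> A" for F
    proof -
      obtain M where M: "N \<le> M" "F \<subseteq> B M" using mono_cover_finite_subset[OF mono cover F(1,3)] by blast
      have "sum g (B M - F) \<in> ideal_pow n m"
        using rest[OF F(2)] ideal_pow_antimono[of m N] unfolding N_def by auto
      moreover have "S M - L \<in> ideal_pow n m" using N1 M(1) unfolding N_def by simp
      ultimately have "sum g (B M - F) - (S M - L) \<in> ideal_pow n m"
        by (rule ideal_diff[OF is_ideal_ideal_pow])
      moreover have "sum g (B M - F) - (S M - L) = L - sum g F"
        unfolding S_def using M(2) fin by (simp add: sum.subset_diff[of F "B M"])
      ultimately show ?thesis by simp
    qed
    then show "\<exists>F0. finite F0 \<and> F0 \<subseteq> A \<and> (\<forall>F. finite F \<and> F0 \<subseteq> F \<and> F \<subseteq> A \<longrightarrow>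
        L - sum g F \<in> ideal_pow n m)"
      using fin sub by (intro exI[of _ "B N"]) auto
  qed
  then show ?thesis by blast
qed

lemma adic_has_sum_monomial_series:
  assumes complete: "adic_complete n" and x: "\<forall>j<r. x j \<in> n"
    and \<Gamma>: "\<Gamma> \<subseteq> monomials r" and J: "finite J"
  shows "\<exists>L. adic_has_sum n (\<lambda>(i, u). c i u * mono_eval r x u) (J \<times> \<Gamma>) L"
proof -
  define B where "B N = J \<times> {u \<in> \<Gamma>. \<forall>j<r. u j < N}" for N
  have fin: "finite (B N)" for N
  proof -
    have "{u \<in> \<Gamma>. \<forall>j<r. u j < N} \<subseteq> {u \<in> monomials r. \<forall>j<r. u j < N}" using \<Gamma> by blast
    from finite_subset[OF this finite_monomials_bounded] show ?thesis
      unfolding B_def using J by simp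
  qed
  have sub: "B N \<subseteq> J \<times> \<Gamma>" for N unfolding B_def by blast
  have mono: "mono B" unfolding mono_def B_def by auto
  have cover: "\<exists>N. a \<in> B N" if "a \<in> J \<times> \<Gamma>" for a
  proof -
    have "\<forall>j<r. snd a j < Suc (\<Sum>j<r. snd a j)"
      using member_le_sum[of _ "{..<r}" "snd a"] by (simp add: le_imp_less_Suc)
    then show ?thesis using that unfolding B_def by (intro exI[of _ "Suc (\<Sum>j<r. snd a j)"]) auto
  qed
  have tail: "(\<lambda>(i, u). c i u * mono_eval r x u) a \<in> ideal_pow n N" if "a \<in> J \<times> \<Gamma> - B N" for N a
  proof -
    have "\<not> (\<forall>j<r. snd a j < N)" using that unfolding B_def by auto
    then obtain j where "j < r" "N \<le> snd a j" by (auto simp: not_less)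
    then have "mono_eval r x (snd a) \<in> ideal_pow n N" by (rule mono_eval_in_ideal_pow[OF x])
    then show ?thesis by (simp add: case_prod_beta ideal_mult_left is_ideal_ideal_pow)
  qed
  show ?thesis by (rule adic_has_sum_exhaustion[OF complete fin sub mono cover tail])
qed

lemma represents_exists:
  assumes "adic_complete n" "\<forall>j<r. x j \<in> n" "\<Gamma> \<subseteq> monomials r"
  shows "\<exists>s. represents n r x l f \<Gamma> c s"
  using adic_has_sum_monomial_series[OF assms, of "{..<l}" "\<lambda>i u. c i u * f i"]
  unfolding represents_def by auto

lemma represents_iff_adic_has_sum:
  assumes complete: "adic_complete n" and x: "\<forall>j<r. x j \<in> n" and \<Gamma>: "\<Gamma> \<subseteq> monomials r"
  shows "represents n r x l f \<Gamma> c s \<longleftrightarrow>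
    adic_has_sum n (\<lambda>u. (\<Sum>i<l. c i u * f i) * mono_eval r x u) \<Gamma> s"
proof -
  have collapse: "adic_has_sum n (\<lambda>u. (\<Sum>i<l. c i u * f i) * mono_eval r x u) \<Gamma> t"
    if "represents n r x l f \<Gamma> c t" for t
    using adic_has_sum_Times_finite[where t = "\<lambda>i u. c i u * f i * mono_eval r x u"] that
    unfolding represents_def by (simp add: sum_distrib_right)
  show ?thesis
  proof
    assume "adic_has_sum n (\<lambda>u. (\<Sum>i<l. c i u * f i) * mono_eval r x u) \<Gamma> s"
    moreover obtain L where L: "represents n r x l f \<Gamma> c L"
      using represents_exists[OF complete x \<Gamma>] by blast
    ultimately have "L = s"
      using collapse complete unfolding adic_complete_def by (blast intro: adic_has_sum_unique)
    with L show "represents n r x l f \<Gamma> c s" by simp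
  qed (rule collapse)
qed

lemma represents_unique:
  assumes "(\<Inter>m. ideal_pow n m) = {0}"
    and "represents n r x l f \<Gamma> c s" "represents n r x l f \<Gamma> c t"
  shows "s = t"
  using assms unfolding represents_def by (rule adic_has_sum_unique)

lemma represents_add:
  assumes "represents n r x l f \<Gamma> c s" "represents n r x l f \<Gamma> d t"
  shows "represents n r x l f \<Gamma> (\<lambda>i u. c i u + d i u) (s + t)"
  using adic_has_sum_add[OF assms[unfolded represents_def]] unfolding represents_def
  by (rule adic_has_sum_cong[rotated]) (auto simp: algebra_simps)

lemma represents_cmult:
  assumes "represents n r x l f \<Gamma> c s"
  shows "represents n r x l f \<Gamma> (\<lambda>i u. a * c i u) (a * s)"
  using adic_has_sum_cmult[OF assms[unfolded represents_def], of a] unfolding represents_def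
  by (rule adic_has_sum_cong[rotated]) (auto simp: algebra_simps)

section \<open>Coefficients in the coefficient field\<close>

lemma coefficient_field_closed:
  assumes "coefficient_field n k" "a \<in> k" "b \<in> k"
  shows "a + b \<in> k \<and> a * b \<in> k \<and> a - b \<in> k"
proof -
  have add_mult: "\<forall>a\<in>k. \<forall>b\<in>k. a + b \<in> k \<and> a * b \<in> k"
    using assms(1) unfolding coefficient_field_def by (elim conjE)
  have uminus: "\<forall>a\<in>k. - a \<in> k"
    using assms(1) unfolding coefficient_field_def by (elim conjE)
  have "a + - b \<in> k" using add_mult uminus assms(2,3) by blast
  then have "a - b \<in> k" by simp
  with add_mult assms(2,3) show ?thesis by blast
qed

lemma coeff_families_add:
  fixes c d :: "nat \<Rightarrow> (nat \<Rightarrow> nat) \<Rightarrow> 'a::comm_ring_1"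
  assumes "\<And>a b. a \<in> k \<Longrightarrow> b \<in> k \<Longrightarrow> a + b \<in> k"
    and "c \<in> coeff_families k l \<Gamma>" "d \<in> coeff_families k l \<Gamma>"
  shows "(\<lambda>i u. c i u + d i u) \<in> coeff_families k l \<Gamma>"
  using assms unfolding coeff_families_def by simp

lemma coeff_families_cmult:
  fixes c :: "nat \<Rightarrow> (nat \<Rightarrow> nat) \<Rightarrow> 'a::comm_ring_1"
  assumes "\<And>b. b \<in> k \<Longrightarrow> a * b \<in> k" and "c \<in> coeff_families k l \<Gamma>"
  shows "(\<lambda>i u. a * c i u) \<in> coeff_families k l \<Gamma>"
  using assms unfolding coeff_families_def by simp

definition lin_span :: "'a::comm_ring_1 set \<Rightarrow> nat \<Rightarrow> (nat \<Rightarrow> 'a) \<Rightarrow> 'a set" where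
  "lin_span k l f = {\<Sum>i<l. a i * f i | a. \<forall>i<l. a i \<in> k}"

lemma lin_comb_coeffs_unique:
  fixes f :: "nat \<Rightarrow> 'a::comm_ring_1"
  assumes k_diff: "\<And>a b. a \<in> k \<Longrightarrow> b \<in> k \<Longrightarrow> a - b \<in> k" and "0 \<in> I"
    and indep: "\<forall>a. (\<forall>i<l. a i \<in> k) \<longrightarrow> (\<Sum>i<l. a i * f i) \<in> I \<longrightarrow> (\<forall>i<l. a i = 0)"
    and a: "\<forall>i<l. a i \<in> k" and b: "\<forall>i<l. b i \<in> k"
    and eq: "(\<Sum>i<l. a i * f i) = (\<Sum>i<l. b i * f i)" and "i < l"
  shows "a i = b i"
proof -
  have diff_k: "a i - b i \<in> k" if "i < l" for i using a b that by (simp add: k_diff)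
  have "(\<Sum>i<l. (a i - b i) * f i) = (\<Sum>i<l. a i * f i) - (\<Sum>i<l. b i * f i)"
    by (simp add: left_diff_distrib sum_subtractf)
  with eq \<open>0 \<in> I\<close> have diff_I: "(\<Sum>i<l. (a i - b i) * f i) \<in> I" by simp
  from indep[rule_format, OF diff_k diff_I \<open>i < l\<close>] show ?thesis by simp
qed

lemma inj_on_coeff_families:
  fixes f :: "nat \<Rightarrow> 'a::comm_ring_1"
  assumes k_diff: "\<And>a b. a \<in> k \<Longrightarrow> b \<in> k \<Longrightarrow> a - b \<in> k" and "0 \<in> I"
    and indep: "\<forall>a. (\<forall>i<l. a i \<in> k) \<longrightarrow> (\<Sum>i<l. a i * f i) \<in> I \<longrightarrow> (\<forall>i<l. a i = 0)"
  shows "inj_on (\<lambda>c u. \<Sum>i<l. c i u * f i) (coeff_families k l \<Gamma>)"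
proof (rule inj_onI)
  fix c c'
  assume c: "c \<in> coeff_families k l \<Gamma>" and c': "c' \<in> coeff_families k l \<Gamma>"
    and eq: "(\<lambda>u. \<Sum>i<l. c i u * f i) = (\<lambda>u. \<Sum>i<l. c' i u * f i)"
  show "c = c'"
  proof (intro ext)
    fix i u
    show "c i u = c' i u"
    proof (cases "i < l \<and> u \<in> \<Gamma>")
      case True
      then have "\<forall>i<l. c i u \<in> k" "\<forall>i<l. c' i u \<in> k"
        using c c' unfolding coeff_families_def by simp_all
      from lin_comb_coeffs_unique[OF k_diff \<open>0 \<in> I\<close> indep this fun_cong[OF eq]] True
      show ?thesis by simp
    next
      case False
      with c c' show ?thesis unfolding coeff_families_def by simp
    qed
  qed
qed

lemma bij_betw_coeff_families:
  fixes f :: "nat \<Rightarrow> 'a::comm_ring_1"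
  assumes k_diff: "\<And>a b. a \<in> k \<Longrightarrow> b \<in> k \<Longrightarrow> a - b \<in> k" and "0 \<in> I"
    and indep: "\<forall>a. (\<forall>i<l. a i \<in> k) \<longrightarrow> (\<Sum>i<l. a i * f i) \<in> I \<longrightarrow> (\<forall>i<l. a i = 0)"
  shows "bij_betw (\<lambda>c u. \<Sum>i<l. c i u * f i) (coeff_families k l \<Gamma>)
    {d. (\<forall>u\<in>\<Gamma>. d u \<in> lin_span k l f) \<and> (\<forall>u. u \<notin> \<Gamma> \<longrightarrow> d u = 0)}"
  unfolding bij_betw_def
proof (intro conjI equalityI subsetI)
  show "inj_on (\<lambda>c u. \<Sum>i<l. c i u * f i) (coeff_families k l \<Gamma>)"
    by (rule inj_on_coeff_families[OF k_diff \<open>0 \<in> I\<close> indep])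
next
  fix d assume "d \<in> (\<lambda>c u. \<Sum>i<l. c i u * f i) ` coeff_families k l \<Gamma>"
  then obtain c where c: "c \<in> coeff_families k l \<Gamma>" and d: "d = (\<lambda>u. \<Sum>i<l. c i u * f i)"
    by blast
  have "d u \<in> lin_span k l f" if "u \<in> \<Gamma>" for u
    using c that unfolding d lin_span_def coeff_families_def by auto
  moreover have "d u = 0" if "u \<notin> \<Gamma>" for u
    using c that unfolding d coeff_families_def by simp
  ultimately show "d \<in> {d. (\<forall>u\<in>\<Gamma>. d u \<in> lin_span k l f) \<and> (\<forall>u. u \<notin> \<Gamma> \<longrightarrow> d u = 0)}"
    by simp
next
  fix d assume d: "d \<in> {d. (\<forall>u\<in>\<Gamma>. d u \<in> lin_span k l f) \<and> (\<forall>u. u \<notin> \<Gamma> \<longrightarrow> d u = 0)}"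
  then have "\<forall>u\<in>\<Gamma>. \<exists>a. d u = (\<Sum>i<l. a i * f i) \<and> (\<forall>i<l. a i \<in> k)"
    unfolding lin_span_def by simp
  then obtain a where a: "\<forall>u\<in>\<Gamma>. d u = (\<Sum>i<l. a u i * f i) \<and> (\<forall>i<l. a u i \<in> k)"
    by (metis (no_types))
  define c where "c i u = (if i < l \<and> u \<in> \<Gamma> then a u i else 0)" for i u
  have "c \<in> coeff_families k l \<Gamma>" unfolding coeff_families_def c_def using a by simp
  moreover have "d = (\<lambda>u. \<Sum>i<l. c i u * f i)"
  proof
    fix u
    show "d u = (\<Sum>i<l. c i u * f i)"
      using a d unfolding c_def by (cases "u \<in> \<Gamma>") simp_all
  qed
  ultimately show "d \<in> (\<lambda>c u. \<Sum>i<l. c i u * f i) ` coeff_families k l \<Gamma>" by blast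
qed

lemma section_fixes_lin_comb:
  fixes \<sigma> :: "'a::comm_ring_1 \<Rightarrow> 'a"
  assumes \<sigma>_add: "\<forall>a b. \<sigma> (a + b) = \<sigma> a + \<sigma> b"
    and \<sigma>_smult: "\<forall>c\<in>k. \<forall>a. \<sigma> (c * a) = c * \<sigma> a"
    and \<sigma>_basis: "\<forall>i<l. \<sigma> (f i) = f i" and a: "\<forall>i<l. a i \<in> k"
  shows "\<sigma> (\<Sum>i<l. a i * f i) = (\<Sum>i<l. a i * f i)"
proof -
  have "\<sigma> 0 = 0" using \<sigma>_add[rule_format, of 0 0] by simp
  then have "\<sigma> (\<Sum>i<l. a i * f i) = (\<Sum>i<l. \<sigma> (a i * f i))"
    using sum_comp_morphism[of \<sigma> "\<lambda>i. a i * f i" "{..<l}"] \<sigma>_add by (simp add: comp_def)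
  also have "\<dots> = (\<Sum>i<l. a i * f i)"
    using \<sigma>_smult \<sigma>_basis a by (intro sum.cong) simp_all
  finally show ?thesis .
qed

lemma linear_section_is_lifting:
  fixes \<sigma> :: "'a::comm_ring_1 \<Rightarrow> 'a"
  assumes I: "is_ideal I"
    and span: "\<forall>s. \<exists>a. (\<forall>i<l. a i \<in> k) \<and> s - (\<Sum>i<l. a i * f i) \<in> I"
    and \<sigma>_well: "\<forall>a b. a - b \<in> I \<longrightarrow> \<sigma> a = \<sigma> b"
    and \<sigma>_add: "\<forall>a b. \<sigma> (a + b) = \<sigma> a + \<sigma> b"
    and \<sigma>_smult: "\<forall>c\<in>k. \<forall>a. \<sigma> (c * a) = c * \<sigma> a"
    and \<sigma>_basis: "\<forall>i<l. \<sigma> (f i) = f i"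
  shows "is_lifting I \<sigma>" and "range \<sigma> = lin_span k l f"
proof -
  note \<sigma>_lin = section_fixes_lin_comb[OF \<sigma>_add \<sigma>_smult \<sigma>_basis]
  have \<sigma>_rep: "\<exists>a. (\<forall>i<l. a i \<in> k) \<and> \<sigma> s = (\<Sum>i<l. a i * f i) \<and> s - (\<Sum>i<l. a i * f i) \<in> I"
    for s
  proof -
    obtain a where a: "\<forall>i<l. a i \<in> k" "s - (\<Sum>i<l. a i * f i) \<in> I" using span by blast
    then have "\<sigma> s = (\<Sum>i<l. a i * f i)" using \<sigma>_well \<sigma>_lin[OF a(1)] by simp
    with a show ?thesis by blast
  qed
  have "\<sigma> a = 0" if "a \<in> I" for a
    using \<sigma>_well[rule_format, of a 0] that \<sigma>_add[rule_format, of 0 0] by simp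
  moreover have "\<sigma> s - s \<in> I" for s
  proof -
    obtain a where a: "\<sigma> s = (\<Sum>i<l. a i * f i)" "s - (\<Sum>i<l. a i * f i) \<in> I"
      using \<sigma>_rep by blast
    from ideal_uminus[OF I a(2)] show ?thesis by (simp add: a(1))
  qed
  ultimately show "is_lifting I \<sigma>" unfolding is_lifting_def using \<sigma>_well by simp
  show "range \<sigma> = lin_span k l f"
  proof
    show "range \<sigma> \<subseteq> lin_span k l f" unfolding lin_span_def using \<sigma>_rep by blast
    show "lin_span k l f \<subseteq> range \<sigma>"
    proof
      fix y assume "y \<in> lin_span k l f"
      then obtain a where "\<forall>i<l. a i \<in> k" "y = (\<Sum>i<l. a i * f i)" unfolding lin_span_def by blast
      then have "y = \<sigma> y" using \<sigma>_lin by simp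
      then show "y \<in> range \<sigma>" by (rule range_eqI)
    qed
  qed
qed

lemma ex1_represents:
  fixes \<sigma> :: "'a::comm_ring_1 \<Rightarrow> 'a"
  assumes complete: "adic_complete n" and x: "\<forall>j<r. x j \<in> n" and \<Gamma>: "\<Gamma> \<subseteq> monomials r"
    and expand: "expandable n I r x \<Gamma>"
    and lift: "is_lifting I \<sigma>" and range_\<sigma>: "range \<sigma> = lin_span k l f"
    and k_diff: "\<And>a b. a \<in> k \<Longrightarrow> b \<in> k \<Longrightarrow> a - b \<in> k" and "0 \<in> I"
    and indep: "\<forall>a. (\<forall>i<l. a i \<in> k) \<longrightarrow> (\<Sum>i<l. a i * f i) \<in> I \<longrightarrow> (\<forall>i<l. a i = 0)"
  shows "\<exists>!c. c \<in> coeff_families k l \<Gamma> \<and> represents n r x l f \<Gamma> c s"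
proof -
  have "\<exists>!d. d \<in> {d. (\<forall>u\<in>\<Gamma>. d u \<in> lin_span k l f) \<and> (\<forall>u. u \<notin> \<Gamma> \<longrightarrow> d u = 0)} \<and>
      adic_has_sum n (\<lambda>u. d u * mono_eval r x u) \<Gamma> s"
    using expand[unfolded expandable_def, rule_format, OF lift, of s] by (simp add: range_\<sigma>)
  from bij_betw_ex1_pullback[OF bij_betw_coeff_families[OF k_diff \<open>0 \<in> I\<close> indep] this]
  show ?thesis by (simp add: represents_iff_adic_has_sum[OF complete x \<Gamma>])
qed

lemma coefficient_map_bij_linear:
  fixes k :: "'a::comm_ring_1 set"
  assumes complete: "adic_complete n" and x: "\<forall>j<r. x j \<in> n" and \<Gamma>: "\<Gamma> \<subseteq> monomials r"
    and unique: "\<And>s. \<exists>!c. c \<in> coeff_families k l \<Gamma> \<and> represents n r x l f \<Gamma> c s"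
    and k_add: "\<And>a b. a \<in> k \<Longrightarrow> b \<in> k \<Longrightarrow> a + b \<in> k"
    and k_mult: "\<And>a b. a \<in> k \<Longrightarrow> b \<in> k \<Longrightarrow> a * b \<in> k"
  defines "\<Phi> \<equiv> \<lambda>s. THE c. c \<in> coeff_families k l \<Gamma> \<and> represents n r x l f \<Gamma> c s"
  shows "bij_betw \<Phi> UNIV (coeff_families k l \<Gamma>)"
    and "\<Phi> (s + t) = (\<lambda>i u. \<Phi> s i u + \<Phi> t i u)"
    and "a \<in> k \<Longrightarrow> \<Phi> (a * s) = (\<lambda>i u. a * \<Phi> s i u)"
proof -
  have sep: "(\<Inter>m. ideal_pow n m) = {0}" using complete unfolding adic_complete_def by blast
  have \<Phi>: "\<Phi> s \<in> coeff_families k l \<Gamma>" "represents n r x l f \<Gamma> (\<Phi> s) s" for s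
    using theI'[OF unique[of s]] unfolding \<Phi>_def by simp_all
  have \<Phi>_eq: "\<Phi> s = c" if "c \<in> coeff_families k l \<Gamma>" "represents n r x l f \<Gamma> c s" for c s
    unfolding \<Phi>_def using that by (intro the1_equality[OF unique]) simp
  show "bij_betw \<Phi> UNIV (coeff_families k l \<Gamma>)"
    unfolding \<Phi>_def
    using unique represents_exists[OF complete x \<Gamma>] represents_unique[OF sep]
    by (rule bij_betw_The_unique)
  show "\<Phi> (s + t) = (\<lambda>i u. \<Phi> s i u + \<Phi> t i u)"
    by (intro \<Phi>_eq coeff_families_add[OF k_add] represents_add \<Phi>)
  show "\<Phi> (a * s) = (\<lambda>i u. a * \<Phi> s i u)" if "a \<in> k"
    by (intro \<Phi>_eq coeff_families_cmult[OF k_mult[OF that]] represents_cmult \<Phi>)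
qed

theorem lemma4p1:
  fixes n I k :: "'a::comm_ring_1 set"
    and \<Gamma> :: "(nat \<Rightarrow> nat) set"
    and r l :: nat
    and x f :: "nat \<Rightarrow> 'a"
    and \<sigma> :: "'a \<Rightarrow> 'a"
  assumes noeth: "noetherian TYPE('a)"
    and local: "local_ring_max n"
    and complete: "adic_complete n"
    and coeff: "coefficient_field n k"
    and std: "standard_set r \<Gamma>"
    and primary: "n_primary n I"
    and gens: "I = ideal_gen (x ` {..<r})"
    and expand: "expandable n I r x \<Gamma>"
    and span: "\<forall>s. \<exists>a. (\<forall>i<l. a i \<in> k) \<and> s - (\<Sum>i<l. a i * f i) \<in> I"
    and indep: "\<forall>a. (\<forall>i<l. a i \<in> k) \<longrightarrow> (\<Sum>i<l. a i * f i) \<in> I \<longrightarrow> (\<forall>i<l. a i = 0)"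
    and \<sigma>_well: "\<forall>a b. a - b \<in> I \<longrightarrow> \<sigma> a = \<sigma> b"
    and \<sigma>_add: "\<forall>a b. \<sigma> (a + b) = \<sigma> a + \<sigma> b"
    and \<sigma>_smult: "\<forall>c\<in>k. \<forall>a. \<sigma> (c * a) = c * \<sigma> a"
    and \<sigma>_basis: "\<forall>i<l. \<sigma> (f i) = f i"
  shows "is_lifting I \<sigma> \<and>
    (\<forall>s. \<exists>!c. c \<in> coeff_families k l \<Gamma> \<and> represents n r x l f \<Gamma> c s) \<and>
    (let \<Phi> = (\<lambda>s. THE c. c \<in> coeff_families k l \<Gamma> \<and> represents n r x l f \<Gamma> c s) in
       bij_betw \<Phi> UNIV (coeff_families k l \<Gamma>) \<and>
       (\<forall>s t. \<Phi> (s + t) = (\<lambda>i u. \<Phi> s i u + \<Phi> t i u)) \<and>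
       (\<forall>a\<in>k. \<forall>s. \<Phi> (a * s) = (\<lambda>i u. a * \<Phi> s i u)))"
proof -
  have I: "is_ideal I" unfolding gens by (rule is_ideal_ideal_gen)
  have "x ` {..<r} \<subseteq> n"
    using ideal_gen_subset n_primary_subset[OF primary] unfolding gens by (rule subset_trans)
  then have x: "\<forall>j<r. x j \<in> n" by blast
  have \<Gamma>: "\<Gamma> \<subseteq> monomials r" using std unfolding standard_set_def by blast
  have k_add: "a + b \<in> k" and k_mult: "a * b \<in> k" and k_diff: "a - b \<in> k"
    if "a \<in> k" "b \<in> k" for a b
    using coefficient_field_closed[OF coeff that] by simp_all
  have lift: "is_lifting I \<sigma>" and range_\<sigma>: "range \<sigma> = lin_span k l f"
    using linear_section_is_lifting[OF I span \<sigma>_well \<sigma>_add \<sigma>_smult \<sigma>_basis] by blast+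
  have unique: "\<exists>!c. c \<in> coeff_families k l \<Gamma> \<and> represents n r x l f \<Gamma> c s" for s
    by (rule ex1_represents[OF complete x \<Gamma> expand lift range_\<sigma> k_diff ideal_zero[OF I] indep])
  note \<Phi> = coefficient_map_bij_linear[OF complete x \<Gamma> unique k_add k_mult]
  show ?thesis unfolding Let_def using lift unique \<Phi> by simp
qed

end
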